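(* Let $n,m\in\mathbb{N}$. If for $i\in I_{nm}$ there exist $j,j'\in I_n$, $k,k'\in I_m$ and $\gamma,\gamma'\in SL(2,\mathbb{Z})$ such that $\gamma A_jA_k=A_i=\gamma'A_{j'}A_{k'}$, then $j=j'$, $k=k'$ and $\gamma=\gamma'$.
   Context: For $N\in\mathbb{N}$: $I_N=\{[x:y]_N:\gcd(x,y,N)=1\}$, where $[x:y]_N$ is the class of $(x,y)\in\mathbb{Z}^2$ under $(x,y)\sim(x',y')$ iff $x'\equiv kx$, $y'\equiv ky\pmod N$ for some $k$ with $\gcd(k,N)=1$. The map $(c,b)\mapsto[c:d_N(c,b)]_N$ with $d_N(c,b)=\min_{0\le k\le c-1}\{c+b+kN/c:\gcd(c,b+kN/c)=1\}$ is a bijection from $\{(c,b):c\ge1,\ c\mid N,\ 0\le b\le N/c-1,\ \gcd(c,b,N/c)=1\}$ onto $I_N$, and for $i\in I_N$ one sets $A_i=\begin{pmatrix}c&b\\0&N/c\end{pmatrix}$ where $(c,b)$ corresponds to $i$. *)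

theory Defs
  imports "HOL-Analysis.Analysis"
begin

definition proj_class :: "nat \<Rightarrow> int \<times> int \<Rightarrow> (int \<times> int) set" where
  "proj_class N p = {(x', y'). \<exists>k::int. coprime k (int N) \<and>
       x' mod int N = (k * fst p) mod int N \<and> y' mod int N = (k * snd p) mod int N}"

definition I_set :: "nat \<Rightarrow> (int \<times> int) set set" where
  "I_set N = {proj_class N (x, y) | x y. gcd (gcd x y) (int N) = 1}"

definition d_N :: "nat \<Rightarrow> int \<Rightarrow> int \<Rightarrow> int" where
  "d_N N c b = Min {c + b + k * (int N div c) | k. 0 \<le> k \<and> k \<le> c - 1 \<and>
                      gcd c (b + k * (int N div c)) = 1}"

definition param_set :: "nat \<Rightarrow> (int \<times> int) set" where
  "param_set N = {(c, b). c \<ge> 1 \<and> c dvd int N \<and> 0 \<le> b \<and> b \<le> int N div c - 1 \<and>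
                          gcd (gcd c b) (int N div c) = 1}"

definition param_to_I :: "nat \<Rightarrow> int \<times> int \<Rightarrow> (int \<times> int) set" where
  "param_to_I N cb = proj_class N (fst cb, d_N N (fst cb) (snd cb))"

definition A_mat :: "nat \<Rightarrow> (int \<times> int) set \<Rightarrow> int ^ 2 ^ 2" where
  "A_mat N i = (let (c, b) = the_inv_into (param_set N) (param_to_I N) i
                in vector [vector [c, b], vector [0, int N div c]])"

definition SL2Z :: "(int ^ 2 ^ 2) set" where
  "SL2Z = {g. det g = 1}"

end

theory Submission
  imports Defs "HOL-Number_Theory.Cong"
begin

text \<open>Write \<open>A\<^sub>j = [[c\<^sub>1, b\<^sub>1], [0, M\<^sub>1]]\<close>, \<open>A\<^sub>k = [[c\<^sub>2, b\<^sub>2], [0, M\<^sub>2]]\<close> and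
  \<open>A\<^sub>i = [[c, b], [0, M]]\<close>. Since \<open>A\<^sub>j A\<^sub>k\<close> and \<open>A\<^sub>i\<close> are upper triangular with positive
  diagonal, \<open>\<gamma> A\<^sub>j A\<^sub>k = A\<^sub>i\<close> forces \<open>\<gamma> = [[1, a], [0, 1]]\<close>, \<open>c = c\<^sub>1 c\<^sub>2\<close> and
  \<open>b = c\<^sub>1 b\<^sub>2 + b\<^sub>1 M\<^sub>2 + a M\<^sub>1 M\<^sub>2\<close>. As \<open>gcd(c, b, M) = 1\<close>, \<open>c\<^sub>1\<close> is coprime to \<open>M\<^sub>2\<close>;
  together with \<open>c\<^sub>2 M\<^sub>2 = m\<close> this determines \<open>c\<^sub>1\<close> and \<open>c\<^sub>2\<close> from \<open>c\<close>, and then \<open>b\<close>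
  determines \<open>b\<^sub>2\<close>, \<open>b\<^sub>1\<close> and \<open>a\<close> as the digits of a mixed radix expansion. The parameters
  \<open>(c, b)\<close> determine \<open>j\<close> and \<open>k\<close> because \<open>(c, b) \<mapsto> [c : d\<^sub>N(c, b)]\<^sub>N\<close> is a bijection onto
  \<open>I\<^sub>N\<close>; for this the minimum defining \<open>d\<^sub>N\<close> must exist, which holds because
  \<open>gcd(c, b, M) = 1\<close> lets \<open>b + k M\<close> be made coprime to \<open>c\<close>.\<close>

section \<open>The classes \<open>[x : y]\<^sub>N\<close>\<close>

lemma mem_proj_class_iff:
  "q \<in> proj_class N p \<longleftrightarrow>
     (\<exists>k. coprime k (int N) \<and> [fst q = k * fst p] (mod int N) \<and> [snd q = k * snd p] (mod int N))"
  by (cases q) (simp add: proj_class_def cong_def)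

lemma proj_class_refl: "p \<in> proj_class N p"
  unfolding mem_proj_class_iff by (rule exI[of _ 1]) simp

lemma proj_class_trans:
  assumes "q \<in> proj_class N p" "r \<in> proj_class N q"
  shows "r \<in> proj_class N p"
proof -
  obtain k l where k: "coprime k (int N)" "[fst q = k * fst p] (mod int N)" "[snd q = k * snd p] (mod int N)"
    and l: "coprime l (int N)" "[fst r = l * fst q] (mod int N)" "[snd r = l * snd q] (mod int N)"
    using assms unfolding mem_proj_class_iff by blast
  have "[fst r = (l * k) * fst p] (mod int N)" "[snd r = (l * k) * snd p] (mod int N)"
    using k l by (metis cong_scalar_left cong_trans mult.assoc)+
  moreover have "coprime (l * k) (int N)"
    using k l by simp
  ultimately show ?thesis
    unfolding mem_proj_class_iff by blast
qed

lemma proj_class_sym: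
  assumes "q \<in> proj_class N p"
  shows "p \<in> proj_class N q"
proof -
  obtain k where k: "coprime k (int N)" "[fst q = k * fst p] (mod int N)" "[snd q = k * snd p] (mod int N)"
    using assms unfolding mem_proj_class_iff by blast
  obtain l where l: "[k * l = 1] (mod int N)"
    using k(1) cong_solve_coprime_int by blast
  have "[l * fst q = (k * l) * fst p] (mod int N)" "[l * snd q = (k * l) * snd p] (mod int N)"
    using k by (metis cong_scalar_left mult.assoc mult.commute)+
  then have "[fst p = l * fst q] (mod int N)" "[snd p = l * snd q] (mod int N)"
    using l by (metis cong_scalar_right cong_sym cong_trans mult_1)+
  moreover have "coprime l (int N)"
    using l coprime_iff_invertible_int by (metis mult.commute)
  ultimately show ?thesis
    unfolding mem_proj_class_iff by blast
qed

lemma proj_class_eq: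
  assumes "q \<in> proj_class N p"
  shows "proj_class N q = proj_class N p"
  using assms proj_class_trans proj_class_sym by blast

section \<open>The parametrisation of \<open>I\<^sub>N\<close>\<close>

lemma coprime_if_no_common_prime_divisor:
  fixes a b :: int
  assumes "a \<noteq> 0" and "\<And>p. prime p \<Longrightarrow> p dvd a \<Longrightarrow> \<not> p dvd b"
  shows "coprime a b"
proof (rule ccontr)
  assume "\<not> coprime a b"
  then have "\<not> is_unit (gcd a b)"
    by (simp add: coprime_iff_gcd_eq_1)
  moreover have "gcd a b \<noteq> 0"
    using assms(1) by simp
  ultimately obtain p where "prime p" "p dvd gcd a b"
    using prime_divisor_exists by blast
  with assms(2) show False
    by (meson gcd_dvd1 gcd_dvd2 dvd_trans)
qed

lemma exists_coprime_add_mult: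
  fixes c b M :: int
  assumes "c \<noteq> 0" and "gcd (gcd c b) M = 1"
  shows "\<exists>k. coprime c (b + k * M)"
proof
  define P where "P = {p \<in> prime_factors c. \<not> p dvd b}"
  have "\<not> p dvd b + \<Prod>P * M" if p: "prime p" "p dvd c" for p
  proof
    assume dvd_sum: "p dvd b + \<Prod>P * M"
    have "p dvd \<Prod>P \<longleftrightarrow> p \<in> P"
      using p by (auto simp: P_def prime_dvd_prod_iff in_prime_factors_iff dest: primes_dvd_imp_eq)
    show False
    proof (cases "p dvd b")
      case True
      then have "p dvd \<Prod>P * M"
        using dvd_sum by (simp add: dvd_add_right_iff)
      with \<open>p dvd \<Prod>P \<longleftrightarrow> p \<in> P\<close> True have "p dvd M"
        using p(1) by (auto simp: P_def prime_dvd_mult_iff)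
      then have "p dvd gcd (gcd c b) M"
        using p(2) True by simp
      with assms(2) p(1) show False
        using not_prime_unit by metis
    next
      case False
      then have "p dvd \<Prod>P * M"
        using \<open>p dvd \<Prod>P \<longleftrightarrow> p \<in> P\<close> p assms(1) by (simp add: P_def in_prime_factors_iff)
      with False dvd_sum show False
        by (simp add: dvd_add_left_iff)
    qed
  qed
  then show "coprime c (b + \<Prod>P * M)"
    using assms(1) by (rule coprime_if_no_common_prime_divisor[rotated])
qed

lemma d_N_attained:
  assumes "c \<ge> 1" and "gcd (gcd c b) (int N div c) = 1"
  obtains k where "0 \<le> k" "k < c" "coprime c (b + k * (int N div c))"
    "d_N N c b = c + b + k * (int N div c)"
proof -
  define M where "M = int N div c"
  define K where "K = {k. 0 \<le> k \<and> k \<le> c - 1 \<and> gcd c (b + k * M) = 1}"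
  have d: "d_N N c b = Min ((\<lambda>k. c + b + k * M) ` K)"
    unfolding d_N_def K_def M_def by (simp only: setcompr_eq_image)
  obtain k0 where k0: "coprime c (b + k0 * M)"
    using exists_coprime_add_mult assms unfolding M_def by fastforce
  define q r where "q = k0 div c" and "r = k0 mod c"
  have "k0 = q * c + r"
    by (simp add: q_def r_def)
  then have "b + k0 * M = b + r * M + (q * M) * c"
    by (simp add: algebra_simps)
  then have "gcd c (b + r * M) = gcd c (b + k0 * M)"
    using gcd_add_mult[of c "q * M" "b + r * M"] by (simp add: ac_simps)
  then have "coprime c (b + r * M)"
    using k0 by (simp add: coprime_iff_gcd_eq_1)
  then have "r \<in> K"
    using assms(1) by (simp add: K_def r_def coprime_iff_gcd_eq_1)
  moreover have "finite K"
    by (rule finite_subset[of _ "{0..c - 1}"]) (auto simp: K_def)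
  ultimately have "d_N N c b \<in> (\<lambda>k. c + b + k * M) ` K"
    unfolding d by (intro Min_in) auto
  with that show thesis
    by (auto simp: K_def M_def coprime_iff_gcd_eq_1)
qed

lemma coprime_d_N:
  assumes "c \<ge> 1" and "gcd (gcd c b) (int N div c) = 1"
  shows "coprime c (d_N N c b)"
proof -
  obtain k where "coprime c (b + k * (int N div c))" "d_N N c b = c + b + k * (int N div c)"
    using d_N_attained assms by metis
  then show ?thesis
    by (simp add: add.assoc coprime_iff_gcd_eq_1)
qed

lemma cong_d_N:
  assumes "c \<ge> 1" and "gcd (gcd c b) (int N div c) = 1"
  shows "[d_N N c b = c + b] (mod int N div c)"
proof -
  obtain k where "d_N N c b = c + b + k * (int N div c)"
    using d_N_attained assms by metis
  then show ?thesis
    by (simp add: cong_iff_dvd_diff)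
qed

lemma param_setD:
  assumes "(c, b) \<in> param_set N"
  shows "c \<ge> 1" "c * (int N div c) = int N" "0 \<le> b" "b < int N div c"
    "gcd (gcd c b) (int N div c) = 1"
  using assms by (auto simp: param_set_def)

lemma coprime_of_cong_mult:
  fixes K y d c :: int
  assumes "[K * y = d] (mod c)" and "coprime c d"
  shows "coprime K c"
proof (rule coprimeI)
  fix t assume "t dvd K" "t dvd c"
  have "c dvd K * y - d"
    using assms(1) by (simp add: cong_iff_dvd_diff)
  with \<open>t dvd c\<close> have "t dvd K * y - d"
    by (rule dvd_trans)
  moreover have "t dvd K * y"
    using \<open>t dvd K\<close> by simp
  ultimately have "t dvd d"
    using dvd_diff[of t "K * y" "K * y - d"] by simp
  with assms(2) \<open>t dvd c\<close> show "is_unit t"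
    by (rule coprime_common_divisor)
qed

text \<open>The inverse \<open>v\<close> of \<open>u\<close> modulo \<open>M\<close> already scales \<open>x = c u\<close> to \<open>c\<close> modulo \<open>N = c M\<close>;
  adding a multiple of \<open>M\<close> to \<open>v\<close> corrects the second coordinate modulo \<open>N\<close> without
  disturbing the first.\<close>

lemma mem_proj_class_lift:
  fixes x y c d u v M :: int
  assumes N: "int N = c * M" and x: "x = c * u" and v: "[u * v = 1] (mod M)"
    and "coprime c y" "coprime c d" and y: "[v * y = d] (mod M)"
  shows "(c, d) \<in> proj_class N (x, y)"
proof -
  have "M dvd d - v * y"
    using cong_sym[OF y] by (simp add: cong_iff_dvd_diff)
  then obtain s where s: "d - v * y = M * s"
    by (rule dvdE)
  obtain w where w: "[y * w = 1] (mod c)"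
    using \<open>coprime c y\<close> cong_solve_coprime_int coprime_commute by blast
  define K where "K = v + s * w * M"
  have "M dvd u * v - 1"
    using v by (simp add: cong_iff_dvd_diff)
  then have "int N dvd c * (u * v - 1) + (s * w * u) * int N"
    unfolding N by (simp add: mult_dvd_mono)
  moreover have "K * x - c = c * (u * v - 1) + (s * w * u) * int N"
    by (simp add: K_def x N algebra_simps)
  ultimately have Kx: "[K * x = c] (mod int N)"
    by (simp add: cong_iff_dvd_diff)
  have "c dvd y * w - 1"
    using w by (simp add: cong_iff_dvd_diff)
  then have "int N dvd (y * w - 1) * (s * M)"
    unfolding N by (rule mult_dvd_mono) simp
  moreover have "K * y - d = (y * w - 1) * (s * M)"
    using s by (simp add: K_def algebra_simps)
  ultimately have Ky: "[K * y = d] (mod int N)"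
    by (simp add: cong_iff_dvd_diff)
  have "[K * u = u * v] (mod M)"
    by (simp add: K_def cong_iff_dvd_diff algebra_simps)
  then have "[K * u = 1] (mod M)"
    using v by (rule cong_trans)
  then have "coprime K M"
    using coprime_iff_invertible_int by blast
  moreover have "coprime K c"
    using cong_modulus_mult[OF Ky[unfolded N]] \<open>coprime c d\<close> by (rule coprime_of_cong_mult)
  ultimately have "coprime K (int N)"
    unfolding N by simp
  with Kx Ky show ?thesis
    unfolding mem_proj_class_iff by (auto intro: cong_sym)
qed

lemma gcd_gcd_eq_1I:
  fixes b c v y M :: int
  assumes "[b = v * y - c] (mod M)" and "coprime c y" and "coprime v M"
  shows "gcd (gcd c b) M = 1"
proof -
  define g where "g = gcd c M"
  have "coprime v g"
    unfolding g_def using assms(3) by (rule coprime_divisors[OF dvd_refl gcd_dvd2])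
  have "coprime y c"
    using assms(2) by (simp add: coprime_commute)
  then have "coprime y g"
    unfolding g_def by (rule coprime_divisors[OF dvd_refl gcd_dvd1])
  have "[b = v * y - c] (mod g)"
    using assms(1) by (rule cong_dvd_modulus) (simp add: g_def)
  also have "[v * y - c = v * y] (mod g)"
    by (simp add: cong_iff_dvd_diff g_def)
  finally have "[v * y = b] (mod g)"
    by (rule cong_sym)
  then have "coprime b g"
    using \<open>coprime v g\<close> \<open>coprime y g\<close> by (simp add: cong_imp_coprime)
  then show ?thesis
    by (simp add: g_def ac_simps coprime_iff_gcd_eq_1)
qed

lemma param_to_I_eq_proj_class:
  assumes p: "(c, b) \<in> param_set N" and x: "x = c * u" and v: "[u * v = 1] (mod int N div c)"
    and "coprime c y" and "[v * y = c + b] (mod int N div c)"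
  shows "param_to_I N (c, b) = proj_class N (x, y)"
proof -
  note P = param_setD[OF p]
  have "[v * y = d_N N c b] (mod int N div c)"
    using \<open>[v * y = c + b] (mod int N div c)\<close> cong_sym[OF cong_d_N[OF P(1,5)]] by (rule cong_trans)
  then have "(c, d_N N c b) \<in> proj_class N (x, y)"
    by (rule mem_proj_class_lift[OF P(2)[symmetric] x v \<open>coprime c y\<close> coprime_d_N[OF P(1,5)]])
  then show ?thesis
    unfolding param_to_I_def fst_conv snd_conv by (rule proj_class_eq)
qed

lemma param_to_I_surj:
  assumes "N \<ge> 1" and "gcd (gcd x y) (int N) = 1"
  shows "\<exists>p \<in> param_set N. param_to_I N p = proj_class N (x, y)"
proof -
  define c M u where "c = gcd x (int N)" and "M = int N div c" and "u = x div c"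
  have "c \<ge> 1"
    using assms(1) gcd_pos_int[of x "int N"] unfolding c_def by linarith
  have x: "x = c * u" and N: "int N = c * M"
    by (simp_all add: c_def M_def u_def)
  have "0 < c * M"
    unfolding N[symmetric] using assms(1) by simp
  then have "M \<ge> 1"
    using \<open>c \<ge> 1\<close> by (simp add: zero_less_mult_iff)
  have "coprime u M"
    using assms(1) div_gcd_coprime[of x "int N"] by (simp add: c_def M_def u_def)
  then obtain v where v: "[u * v = 1] (mod M)"
    using cong_solve_coprime_int by blast
  then have "coprime v M"
    using coprime_iff_invertible_int by (metis mult.commute)
  have "coprime c y"
    using assms(2) by (simp add: c_def coprime_iff_gcd_eq_1 ac_simps)
  define b where "b = (v * y - c) mod M"
  have "gcd (gcd c b) M = 1"
    using \<open>coprime c y\<close> \<open>coprime v M\<close> by (intro gcd_gcd_eq_1I) (simp_all add: b_def cong_def)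
  moreover have "0 \<le> b" "b < M"
    using \<open>M \<ge> 1\<close> by (simp_all add: b_def)
  ultimately have param: "(c, b) \<in> param_set N"
    using \<open>c \<ge> 1\<close> by (simp add: param_set_def M_def c_def)
  have "[v * y = c + b] (mod M)"
    by (simp add: b_def cong_def mod_add_right_eq)
  then have "param_to_I N (c, b) = proj_class N (x, y)"
    using param x v \<open>coprime c y\<close> unfolding M_def by (intro param_to_I_eq_proj_class)
  with param show ?thesis
    by (rule bexI[rotated])
qed

lemma param_to_I_inj: "inj_on (param_to_I N) (param_set N)"
proof (rule inj_onI, clarify)
  fix c b c' b'
  assume p: "(c, b) \<in> param_set N" and p': "(c', b') \<in> param_set N"
    and eq: "param_to_I N (c, b) = param_to_I N (c', b')"
  note P = param_setD[OF p] and P' = param_setD[OF p']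
  define M where "M = int N div c"
  have "(c', d_N N c' b') \<in> proj_class N (c, d_N N c b)"
    using eq proj_class_refl[of "(c', d_N N c' b')" N] by (simp add: param_to_I_def)
  then obtain k where k: "coprime k (int N)" "[c' = k * c] (mod int N)"
    "[d_N N c' b' = k * d_N N c b] (mod int N)"
    unfolding mem_proj_class_iff by auto
  have "c dvd int N" "c' dvd int N" "M dvd int N"
    using P(2) P'(2) dvd_triv_left dvd_triv_right by (metis M_def)+
  have "c' = gcd c' (int N)"
    using \<open>c' dvd int N\<close> P'(1) by simp
  also have "\<dots> = gcd (k * c) (int N)"
    using k(2) by (rule cong_gcd_eq)
  also have "\<dots> = c"
    using k(1) \<open>c dvd int N\<close> P(1) by (simp add: gcd_mult_left_left_cancel coprime_commute)
  finally have "c' = c" .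
  have "c * M dvd c * (1 - k)"
    using k(2) P(2) \<open>c' = c\<close> by (simp add: M_def cong_iff_dvd_diff algebra_simps)
  then have "[k = 1] (mod M)"
    using P(1) by (simp add: cong_iff_dvd_diff dvd_diff_commute)
  have "[c + b' = d_N N c' b'] (mod M)"
    using cong_d_N[OF P'(1,5)] \<open>c' = c\<close> by (simp add: M_def cong_sym)
  also have "[d_N N c' b' = k * d_N N c b] (mod M)"
    using k(3) \<open>M dvd int N\<close> by (rule cong_dvd_modulus)
  also have "[k * d_N N c b = 1 * d_N N c b] (mod M)"
    using \<open>[k = 1] (mod M)\<close> by (rule cong_scalar_right)
  also have "[1 * d_N N c b = c + b] (mod M)"
    using cong_d_N[OF P(1,5)] by (simp add: M_def)
  finally have "[b' = b] (mod M)"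
    by (simp add: cong_add_lcancel)
  then show "c = c' \<and> b = b'"
    using P(3,4) P'(3,4) \<open>c' = c\<close> cong_less_imp_eq_int[of b' M b] by (simp add: M_def)
qed

lemma param_to_I_in_I_set:
  assumes "p \<in> param_set N"
  shows "param_to_I N p \<in> I_set N"
proof -
  obtain c b where p: "p = (c, b)"
    by (cases p)
  have "gcd (gcd c (d_N N c b)) (int N) = 1"
    using coprime_d_N param_setD[OF assms[unfolded p]] by (simp add: coprime_iff_gcd_eq_1)
  then show ?thesis
    unfolding I_set_def
    by (intro CollectI exI[of _ c] exI[of _ "d_N N c b"]) (simp add: p param_to_I_def)
qed

lemma param_to_I_bij:
  assumes "N \<ge> 1"
  shows "bij_betw (param_to_I N) (param_set N) (I_set N)"
  unfolding bij_betw_def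
proof (intro conjI param_to_I_inj subset_antisym)
  show "param_to_I N ` param_set N \<subseteq> I_set N"
    by (rule image_subsetI) (rule param_to_I_in_I_set)
  show "I_set N \<subseteq> param_to_I N ` param_set N"
  proof
    fix i assume "i \<in> I_set N"
    then obtain x y where i: "i = proj_class N (x, y)" and "gcd (gcd x y) (int N) = 1"
      unfolding I_set_def by auto
    obtain p where "p \<in> param_set N" "param_to_I N p = proj_class N (x, y)"
      using param_to_I_surj[OF assms \<open>gcd (gcd x y) (int N) = 1\<close>] by blast
    then show "i \<in> param_to_I N ` param_set N"
      unfolding i by (rule rev_image_eqI[OF _ sym])
  qed
qed

definition param_of :: "nat \<Rightarrow> (int \<times> int) set \<Rightarrow> int \<times> int" where
  "param_of N = the_inv_into (param_set N) (param_to_I N)"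

lemma param_of_mem:
  assumes "N \<ge> 1" and "i \<in> I_set N"
  shows "param_of N i \<in> param_set N"
  unfolding param_of_def
  using bij_betw_apply[OF bij_betw_the_inv_into[OF param_to_I_bij[OF assms(1)]] assms(2)] .

lemma param_to_I_param_of:
  assumes "N \<ge> 1" and "i \<in> I_set N"
  shows "param_to_I N (param_of N i) = i"
  using param_to_I_bij[OF assms(1)] assms(2) unfolding param_of_def
  by (simp add: f_the_inv_into_f_bij_betw)

section \<open>Factorisations of upper triangular matrices\<close>

definition mat2 :: "'a::zero \<Rightarrow> 'a \<Rightarrow> 'a \<Rightarrow> 'a \<Rightarrow> 'a^2^2" where
  "mat2 a b c d = vector [vector [a, b], vector [c, d]]"

lemma mat2_eq_iff:
  "mat2 a b c d = mat2 a' b' c' d' \<longleftrightarrow> a = a' \<and> b = b' \<and> c = c' \<and> d = d'"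
  by (auto simp: mat2_def vec_eq_iff forall_2)

lemma mat2_cases:
  obtains a b c d where "A = mat2 a b c d"
  by (rule that[of "A $ 1 $ 1" "A $ 1 $ 2" "A $ 2 $ 1" "A $ 2 $ 2"]) (simp add: mat2_def vec_eq_iff forall_2)

lemma mat2_mult:
  fixes a b c d e f g h :: "'a::semiring_1"
  shows "mat2 a b c d ** mat2 e f g h =
    mat2 (a * e + b * g) (a * f + b * h) (c * e + d * g) (c * f + d * h)"
  by (simp add: mat2_def vec_eq_iff forall_2 matrix_matrix_mult_def sum_2)

lemma det_mat2:
  fixes a b c d :: "'a::comm_ring_1"
  shows "det (mat2 a b c d) = a * d - b * c"
  by (simp add: mat2_def det_2)

definition param_mat :: "nat \<Rightarrow> int \<times> int \<Rightarrow> int^2^2" where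
  "param_mat N p = mat2 (fst p) (snd p) 0 (int N div fst p)"

lemma A_mat_eq_param_mat: "A_mat N i = param_mat N (param_of N i)"
  by (simp add: A_mat_def param_mat_def param_of_def mat2_def case_prod_beta)

lemma SL2Z_mult_upper_triangular:
  fixes p q r c b M :: int
  assumes "\<gamma> \<in> SL2Z" and eq: "\<gamma> ** mat2 p q 0 r = mat2 c b 0 M" and "p > 0" "c > 0"
  obtains a where "\<gamma> = mat2 1 a 0 1" "c = p" "b = q + a * r" "M = r"
proof -
  obtain a1 a2 a3 a4 where \<gamma>: "\<gamma> = mat2 a1 a2 a3 a4"
    by (rule mat2_cases)
  have e: "a1 * p = c" "a1 * q + a2 * r = b" "a3 * p = 0" "a3 * q + a4 * r = M"
    using eq unfolding \<gamma> mat2_mult mat2_eq_iff by simp_all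
  have "a3 = 0"
    using e(3) \<open>p > 0\<close> by simp
  then have "a1 * a4 = 1"
    using \<open>\<gamma> \<in> SL2Z\<close> by (simp add: SL2Z_def \<gamma> det_mat2)
  moreover have "a1 > 0"
    using e(1) \<open>p > 0\<close> \<open>c > 0\<close> by (metis zero_less_mult_pos2)
  ultimately have "a1 = 1" "a4 = 1"
    by (simp_all add: pos_zmult_eq_1_iff)
  with e \<gamma> \<open>a3 = 0\<close> have "\<gamma> = mat2 1 a2 0 1" "c = p" "b = q + a2 * r" "M = r"
    by simp_all
  then show thesis
    by (rule that)
qed

lemma param_mat_factorization:
  assumes "(c1, b1) \<in> param_set n" "(c2, b2) \<in> param_set m" "(c, b) \<in> param_set (n * m)"
    and "\<gamma> \<in> SL2Z"
    and "\<gamma> ** param_mat n (c1, b1) ** param_mat m (c2, b2) = param_mat (n * m) (c, b)"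
  obtains a where "\<gamma> = mat2 1 a 0 1" "c = c1 * c2"
    "b = c1 * b2 + b1 * (int m div c2) + a * ((int n div c1) * (int m div c2))"
    "coprime c1 (int m div c2)"
proof -
  define M1 M2 M where "M1 = int n div c1" and "M2 = int m div c2" and "M = int (n * m) div c"
  note P1 = param_setD[OF assms(1), folded M1_def]
    and P2 = param_setD[OF assms(2), folded M2_def]
    and P = param_setD[OF assms(3), folded M_def]
  have "\<gamma> ** mat2 (c1 * c2) (c1 * b2 + b1 * M2) 0 (M1 * M2) = mat2 c b 0 M"
    using assms(5) by (simp add: param_mat_def M1_def M2_def M_def mat2_mult flip: matrix_mul_assoc)
  then obtain a where \<gamma>: "\<gamma> = mat2 1 a 0 1" "c = c1 * c2"
    "b = c1 * b2 + b1 * M2 + a * (M1 * M2)" "M = M1 * M2"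
    by (rule SL2Z_mult_upper_triangular[OF assms(4)]) (use P1(1) P2(1) P(1) in auto)
  have "coprime c1 M2"
  proof (rule coprimeI)
    fix t assume "t dvd c1" "t dvd M2"
    then have "t dvd c" "t dvd b" "t dvd M"
      using \<gamma>(2-4) by simp_all
    then have "t dvd gcd (gcd c b) M"
      by simp
    then show "is_unit t"
      using P(5) by simp
  qed
  with that \<gamma> show thesis
    by (simp add: M1_def M2_def)
qed

lemma coprime_factor_unique:
  fixes a b a' b' M M' :: int
  assumes "a * b = a' * b'" and "b * M = b' * M'" and "b * M \<noteq> 0"
    and "coprime a M" "coprime a' M'" "a \<ge> 0" "a' \<ge> 0"
  shows "a = a'"
proof -
  have "(a * M') * (b * M) = (a * b) * (M * M')"
    by (simp add: ac_simps)
  also have "\<dots> = (a' * M) * (b' * M')"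
    using assms(1) by (simp add: ac_simps)
  also have "\<dots> = (a' * M) * (b * M)"
    using assms(2) by simp
  finally have cross: "a * M' = a' * M"
    using assms(3) by simp
  have "a dvd a' * M"
    unfolding cross[symmetric] by simp
  then have "a dvd a'"
    using assms(4) by (simp add: coprime_dvd_mult_left_iff)
  have "a' dvd a * M'"
    unfolding cross by simp
  then have "a' dvd a"
    using assms(5) by (simp add: coprime_dvd_mult_left_iff)
  with \<open>a dvd a'\<close> show ?thesis
    by (rule zdvd_antisym_nonneg[OF assms(6,7)])
qed

lemma mixed_radix_unique:
  fixes c M1 M2 x1 x2 y1 y2 g h :: int
  assumes "coprime c M2"
    and eq: "c * x2 + x1 * M2 + g * (M1 * M2) = c * y2 + y1 * M2 + h * (M1 * M2)"
    and "0 \<le> x1" "x1 < M1" "0 \<le> y1" "y1 < M1" "0 \<le> x2" "x2 < M2" "0 \<le> y2" "y2 < M2"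
  shows "x1 = y1 \<and> x2 = y2 \<and> g = h"
proof -
  have "c * x2 - c * y2 = M2 * ((y1 - x1) + (h - g) * M1)"
    using eq by (simp add: algebra_simps)
  then have "[c * x2 = c * y2] (mod M2)"
    by (simp add: cong_iff_dvd_diff)
  then have "x2 = y2"
    using assms(1,7-10) by (simp add: cong_mult_lcancel cong_less_imp_eq_int)
  with eq have "M2 * (x1 + g * M1) = M2 * (y1 + h * M1)"
    by (simp add: algebra_simps)
  moreover have "M2 > 0"
    using assms(7,8) by linarith
  ultimately have high: "x1 + g * M1 = y1 + h * M1"
    by simp
  then have "x1 - y1 = (h - g) * M1"
    by (simp add: algebra_simps)
  then have "[x1 = y1] (mod M1)"
    by (simp add: cong_iff_dvd_diff)
  then have "x1 = y1"
    using assms(3-6) by (simp add: cong_less_imp_eq_int)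
  moreover have "M1 > 0"
    using assms(3,4) by linarith
  ultimately have "g = h"
    using high by simp
  with \<open>x1 = y1\<close> \<open>x2 = y2\<close> show ?thesis
    by simp
qed

lemma param_mat_factorization_unique:
  assumes "p1 \<in> param_set n" "p1' \<in> param_set n" "p2 \<in> param_set m" "p2' \<in> param_set m"
    and "q \<in> param_set (n * m)" and "\<gamma> \<in> SL2Z" "\<gamma>' \<in> SL2Z"
    and "\<gamma> ** param_mat n p1 ** param_mat m p2 = param_mat (n * m) q"
    and "\<gamma>' ** param_mat n p1' ** param_mat m p2' = param_mat (n * m) q"
  shows "p1 = p1' \<and> p2 = p2' \<and> \<gamma> = \<gamma>'"
proof -
  obtain c1 b1 c1' b1' c2 b2 c2' b2' c b where
    p: "p1 = (c1, b1)" "p1' = (c1', b1')" "p2 = (c2, b2)" "p2' = (c2', b2')" "q = (c, b)"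
    by (cases p1; cases p1'; cases p2; cases p2'; cases q) blast
  note P1 = param_setD[OF assms(1)[unfolded p(1)]] and P1' = param_setD[OF assms(2)[unfolded p(2)]]
    and P2 = param_setD[OF assms(3)[unfolded p(3)]] and P2' = param_setD[OF assms(4)[unfolded p(4)]]
  obtain a where a: "\<gamma> = mat2 1 a 0 1" "c = c1 * c2"
    "b = c1 * b2 + b1 * (int m div c2) + a * ((int n div c1) * (int m div c2))"
    "coprime c1 (int m div c2)"
    using assms(1,3,5,6,8) unfolding p by (rule param_mat_factorization)
  obtain a' where a': "\<gamma>' = mat2 1 a' 0 1" "c = c1' * c2'"
    "b = c1' * b2' + b1' * (int m div c2') + a' * ((int n div c1') * (int m div c2'))"
    "coprime c1' (int m div c2')"
    using assms(2,4,5,7,9) unfolding p by (rule param_mat_factorization)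
  have "c2 * (int m div c2) \<noteq> 0"
    using P2(1,3,4) by simp
  with a(2) a'(2) P2(2) P2'(2) have "c1 = c1'"
    using P1(1) P1'(1)
    by (intro coprime_factor_unique[of c1 c2 c1' c2', OF _ _ _ a(4) a'(4)]) simp_all
  moreover from this have "c2 = c2'"
    using a(2) a'(2) P1(1) by simp
  moreover from calculation have "b1 = b1' \<and> b2 = b2' \<and> a = a'"
  proof (intro mixed_radix_unique[OF a(4)])
    show "c1 * b2 + b1 * (int m div c2) + a * ((int n div c1) * (int m div c2)) =
      c1 * b2' + b1' * (int m div c2) + a' * ((int n div c1) * (int m div c2))"
      using a(3) a'(3) \<open>c1 = c1'\<close> \<open>c2 = c2'\<close> by simp
  qed (use P1(3,4) P1'(3,4) P2(3,4) P2'(3,4) in simp_all)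
  ultimately show ?thesis
    using p a(1) a'(1) by simp
qed

theorem mainTheorem14:
  fixes n m :: nat and i j j' k k' :: "(int \<times> int) set" and \<gamma> \<gamma>' :: "int ^ 2 ^ 2"
  assumes "n \<ge> 1" and "m \<ge> 1"
    and "i \<in> I_set (n * m)"
    and "j \<in> I_set n" and "j' \<in> I_set n"
    and "k \<in> I_set m" and "k' \<in> I_set m"
    and "\<gamma> \<in> SL2Z" and "\<gamma>' \<in> SL2Z"
    and "\<gamma> ** A_mat n j ** A_mat m k = A_mat (n * m) i"
    and "A_mat (n * m) i = \<gamma>' ** A_mat n j' ** A_mat m k'"
  shows "j = j' \<and> k = k' \<and> \<gamma> = \<gamma>'"
proof -
  have "n * m \<ge> 1"
    using assms(1,2) by simp
  with assms have "param_of n j = param_of n j' \<and> param_of m k = param_of m k' \<and> \<gamma> = \<gamma>'"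
    by (intro param_mat_factorization_unique[where n = n and m = m and q = "param_of (n * m) i"])
      (simp_all add: param_of_mem A_mat_eq_param_mat)
  then show ?thesis
    by (metis assms(1,2,4-7) param_to_I_param_of)
qed

end
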